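(* There exist a closed flat surface $N$ and a configuration of two disjoint embedded open metric disks of the same diameter $h$ in $N$, with centers at distance $d$, realizing the supremum of $h\sqrt{4h^2+d^2}/\mathsf{vol}(N)$ over all closed flat surfaces and all such configurations of two disjoint disks of equal diameter.
   Context: A closed flat surface is a flat torus or flat Klein bottle; $\mathsf{vol}$ is area; $d$ is the distance between the centers of the two disks in the flat metric. *)

theory Defs
  imports Complex_Main
begin

text \<open>The Euclidean plane is modelled by the complex numbers.  A closed flat
surface is a flat torus or a flat Klein bottle, given as the quotient of the
plane by its deck group.\<close>

datatype flat_surface =
    FlatTorus complex complex   (* C / (Z u + Z v) *)
  | FlatKlein real real         (* C / <z |-> cnj z + a, z |-> z + i b> *)

fun flat_surface_ok :: "flat_surface \<Rightarrow> bool" where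
  "flat_surface_ok (FlatTorus u v) = (Im (cnj u * v) \<noteq> 0)"
| "flat_surface_ok (FlatKlein a b) = (a > 0 \<and> b > 0)"

fun deck_group :: "flat_surface \<Rightarrow> (complex \<Rightarrow> complex) set" where
  "deck_group (FlatTorus u v) =
     {(\<lambda>z. z + of_int m * u + of_int n * v) | m n :: int. True}"
| "deck_group (FlatKlein a b) =
     {(\<lambda>z. (if even k then z else cnj z) + of_int k * complex_of_real a
            + of_int n * complex_of_real b * \<i>) | k n :: int. True}"

fun flat_vol :: "flat_surface \<Rightarrow> real" where
  "flat_vol (FlatTorus u v) = \<bar>Im (cnj u * v)\<bar>"
| "flat_vol (FlatKlein a b) = a * b"

definition flat_dist :: "flat_surface \<Rightarrow> complex \<Rightarrow> complex \<Rightarrow> real" where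
  "flat_dist N p q = Inf {dist p (g q) | g. g \<in> deck_group N}"

definition embedded_disk :: "flat_surface \<Rightarrow> complex \<Rightarrow> real \<Rightarrow> bool" where
  "embedded_disk N p r \<longleftrightarrow>
     (\<forall>x y g. dist x p < r \<longrightarrow> dist y p < r \<longrightarrow> g \<in> deck_group N \<longrightarrow> x = g y \<longrightarrow> x = y)"

definition disjoint_disks :: "flat_surface \<Rightarrow> complex \<Rightarrow> complex \<Rightarrow> real \<Rightarrow> bool" where
  "disjoint_disks N p q r \<longleftrightarrow>
     (\<forall>x y g. dist x p < r \<longrightarrow> dist y q < r \<longrightarrow> g \<in> deck_group N \<longrightarrow> x \<noteq> g y)"

definition two_disk_config :: "flat_surface \<Rightarrow> complex \<Rightarrow> complex \<Rightarrow> real \<Rightarrow> bool" where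
  "two_disk_config N p q h \<longleftrightarrow>
     flat_surface_ok N \<and> h > 0 \<and> embedded_disk N p (h/2) \<and> embedded_disk N q (h/2)
     \<and> disjoint_disks N p q (h/2)"

definition two_disk_ratio :: "flat_surface \<Rightarrow> complex \<Rightarrow> complex \<Rightarrow> real \<Rightarrow> real" where
  "two_disk_ratio N p q h = h * sqrt (4 * h\<^sup>2 + (flat_dist N p q)\<^sup>2) / flat_vol N"

end

theory Submission
  imports Defs
begin

(* The supremum is sqrt (5/3), attained by the hexagonal torus C / (Z + Z i sqrt 3) with
   disks of diameter 1 centred at 0 and (1 + i sqrt 3)/2, so that d = 1 and the area is sqrt 3.

   For the upper bound, lift everything to the plane.  An embedded disk of diameter h forces
   every nontrivial deck transformation to move its centre by at least h, and disjointness
   forces every lift of one centre to lie at distance at least h from the other; in particular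
   h <= d.  On a torus, take a reduced basis U, V of the lattice: |U| >= h, the height
   gamma = area / |U| satisfies 3 |U|^2 <= 4 gamma^2, and every point lies within
   sqrt (|U|^2 + gamma^2) / 2 of the lattice, which bounds d.  An elementary inequality then
   gives 3 h^2 (4 h^2 + d^2) <= 5 area^2, i.e. ratio <= sqrt (5/3).  On a Klein bottle generated
   by the glide z |-> cnj z + a and the translation by i b, the same inequality follows from the
   translations by 2a and i b, the glide displacements of both centres and the distances
   between the lifts of the centres, after a case analysis on the shape of the fundamental
   domain. *)

section \<open>Deck transformations and disks\<close>

lemma flat_dist_le_deck: "g \<in> deck_group N \<Longrightarrow> flat_dist N p q \<le> dist p (g q)"
  unfolding flat_dist_def
  by (rule cInf_lower) (auto simp: bdd_below_def intro!: exI[of _ 0])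

lemma flat_dist_ge_deck:
  assumes "deck_group N \<noteq> {}" "\<And>g. g \<in> deck_group N \<Longrightarrow> h \<le> dist p (g q)"
  shows "h \<le> flat_dist N p q"
  unfolding flat_dist_def by (rule cInf_greatest) (use assms in auto)

lemma disjoint_disks_dist_ge:
  assumes disj: "disjoint_disks N p q r" and g: "g \<in> deck_group N"
    and ge: "g = (\<lambda>z. (if e then z else cnj z) + c)"
  shows "2*r \<le> dist p (g q)"
proof (rule ccontr)
  assume "\<not> 2*r \<le> dist p (g q)"
  then have lt: "dist p (g q) < 2*r" by simp
  define x where "x = (p + g q)/2"
  define y where "y = (if e then x - c else cnj (x - c))"
  have gy: "x = g y" by (cases e) (simp_all add: ge y_def)
  have "dist x p = dist p (g q)/2"
    by (simp add: x_def dist_norm field_simps norm_minus_commute)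
  then have xp: "dist x p < r" using lt by simp
  have "dist y q = dist x (g q)"
  proof (cases e)
    case True
    then show ?thesis by (simp add: y_def ge dist_norm algebra_simps)
  next
    case False
    have "dist y q = cmod (cnj (x - c) - q)" by (simp add: y_def False dist_norm)
    also have "\<dots> = cmod (cnj (cnj (x - c) - q))" by (rule complex_mod_cnj[symmetric])
    also have "\<dots> = cmod (x - (cnj q + c))" by (simp add: algebra_simps)
    finally show ?thesis by (simp add: ge False dist_norm)
  qed
  also have "dist x (g q) = dist p (g q)/2"
    by (simp add: x_def dist_norm field_simps)
  finally have yq: "dist y q < r" using lt by simp
  from disj xp yq g gy show False unfolding disjoint_disks_def by blast
qed

lemma embedded_disk_translation_ge:
  assumes emb: "embedded_disk N p r" and g: "(\<lambda>z. z + t) \<in> deck_group N" and t: "t \<noteq> 0"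
  shows "2*r \<le> cmod t"
proof (rule ccontr)
  assume "\<not> 2*r \<le> cmod t"
  then have "dist (p + t/2) p < r" "dist (p - t/2) p < r"
    by (simp_all add: dist_norm norm_divide)
  moreover have "p + t/2 = (\<lambda>z. z + t) (p - t/2)" by simp
  moreover have "p + t/2 \<noteq> p - t/2" using t by simp
  ultimately show False using emb g unfolding embedded_disk_def by blast
qed

lemma embedded_disk_glide_ge:
  assumes emb: "embedded_disk N p r" and g: "(\<lambda>z. cnj z + c) \<in> deck_group N" and c: "Re c \<noteq> 0"
  shows "2*r \<le> cmod (cnj p + c - p)"
proof (rule ccontr)
  define t where "t = cnj p + c - p"
  assume "\<not> 2*r \<le> cmod (cnj p + c - p)"
  then have "cmod t < 2*r" by (simp add: t_def)
  then have "dist (p + t/2) p < r" "dist (p - cnj t/2) p < r"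
    by (simp_all add: dist_norm norm_divide)
  moreover have "p + t/2 = (\<lambda>z. cnj z + c) (p - cnj t/2)" by (simp add: t_def field_simps)
  moreover have "Re (p + t/2) \<noteq> Re (p - cnj t/2)" using c by (simp add: t_def)
  ultimately show False using emb g unfolding embedded_disk_def by fastforce
qed

section \<open>Lattices in the plane\<close>

definition lattice :: "complex \<Rightarrow> complex \<Rightarrow> complex set" where
  "lattice u v = {of_int m * u + of_int n * v | m n :: int. True}"

lemma lattice_memI [intro]: "of_int m * u + of_int n * v \<in> lattice u v"
  unfolding lattice_def by blast

lemma lattice_memE:
  assumes "z \<in> lattice u v"
  obtains m n :: int where "z = of_int m * u + of_int n * v"
  using assms unfolding lattice_def by blast

lemma lattice_subset:
  assumes "U \<in> lattice u v" "V \<in> lattice u v"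
  shows "lattice U V \<subseteq> lattice u v"
proof
  fix z assume "z \<in> lattice U V"
  then obtain k j where z: "z = of_int k * U + of_int j * V" by (rule lattice_memE)
  obtain m n where U: "U = of_int m * u + of_int n * v" using assms(1) by (rule lattice_memE)
  obtain m' n' where V: "V = of_int m' * u + of_int n' * v" using assms(2) by (rule lattice_memE)
  have "z = of_int (k*m + j*m') * u + of_int (k*n + j*n') * v"
    by (simp add: z U V algebra_simps)
  then show "z \<in> lattice u v" by (metis lattice_memI)
qed

lemma deck_group_FlatTorus_eq: "deck_group (FlatTorus u v) = (\<lambda>t z. z + t) ` lattice u v"
  unfolding lattice_def by (auto simp: add.assoc)

lemma Im_cnj_lattice_mult:
  "Im (cnj (of_int m * u + of_int n * v) * (of_int k * u + of_int l * v))
     = of_int (m*l - n*k) * Im (cnj u * v)"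
  by (simp add: algebra_simps)

lemma finite_lattice_norm_le:
  assumes "Im (cnj u * v) \<noteq> 0"
  shows "finite {z \<in> lattice u v. cmod z \<le> r}"
proof -
  define D where "D = Im (cnj u * v)"
  define B where "B = \<bar>r\<bar> * (cmod u + cmod v)"
  define K where "K = \<lceil>B / \<bar>D\<bar>\<rceil>"
  have "D \<noteq> 0" using assms by (simp add: D_def)
  have coeff: "\<bar>k\<bar> \<le> K" if "\<bar>of_int k * D\<bar> \<le> B" for k :: int
  proof -
    have "\<bar>real_of_int k\<bar> \<le> B / \<bar>D\<bar>"
      using that \<open>D \<noteq> 0\<close> by (simp add: abs_mult field_simps)
    also have "\<dots> \<le> of_int K" unfolding K_def by (rule le_of_int_ceiling)
    finally show ?thesis by linarith
  qed
  have Im_le: "\<bar>Im (cnj x * y)\<bar> \<le> cmod x * cmod y" for x y :: complex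
    using abs_Im_le_cmod[of "cnj x * y"] by (simp add: norm_mult)
  have "{z \<in> lattice u v. cmod z \<le> r}
          \<subseteq> (\<lambda>(m, n). of_int m * u + of_int n * v) ` ({-K..K} \<times> {-K..K})"
  proof
    fix z assume "z \<in> {z \<in> lattice u v. cmod z \<le> r}"
    then obtain m n where z: "z = of_int m * u + of_int n * v" and r: "cmod z \<le> \<bar>r\<bar>"
      by (auto elim: lattice_memE)
    have "\<bar>of_int m * D\<bar> \<le> cmod z * cmod v"
      using Im_le[of z v] Im_cnj_lattice_mult[of m u n v 0 1] by (simp add: z D_def)
    also have "\<dots> \<le> B" unfolding B_def using r by (intro mult_mono) auto
    finally have "\<bar>m\<bar> \<le> K" by (rule coeff)
    moreover have "\<bar>of_int n * D\<bar> \<le> cmod u * cmod z"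
      using Im_le[of u z] Im_cnj_lattice_mult[of 1 u 0 v m n] by (simp add: z D_def)
    moreover have "cmod u * cmod z \<le> cmod u * \<bar>r\<bar>" using r by (simp add: mult_left_mono)
    moreover have "cmod u * \<bar>r\<bar> \<le> B" unfolding B_def by (simp add: distrib_left mult.commute)
    ultimately have "\<bar>m\<bar> \<le> K" "\<bar>n\<bar> \<le> K" using coeff by auto
    then show "z \<in> (\<lambda>(m, n). of_int m * u + of_int n * v) ` ({-K..K} \<times> {-K..K})"
      using z by (auto simp: abs_le_iff)
  qed
  then show ?thesis by (rule finite_subset) auto
qed

lemma lattice_shortest_vector:
  assumes D: "Im (cnj u * v) \<noteq> 0"
  obtains U where "U \<in> lattice u v" "U \<noteq> 0"
    "\<And>z. z \<in> lattice u v \<Longrightarrow> z \<noteq> 0 \<Longrightarrow> cmod U \<le> cmod z"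
proof -
  define S where "S = {z \<in> lattice u v. cmod z \<le> cmod u} - {0}"
  have fin: "finite S" unfolding S_def using finite_lattice_norm_le[OF D] by blast
  have "u \<in> S" using D lattice_memI[of 1 u 0 v] by (auto simp: S_def)
  define U where "U = arg_min_on cmod S"
  have US: "U \<in> S" using arg_min_if_finite(1)[OF fin] \<open>u \<in> S\<close> unfolding U_def by blast
  have Umin: "cmod U \<le> cmod z" if "z \<in> S" for z
    using arg_min_least[OF fin _ that] that unfolding U_def by blast
  show ?thesis
  proof
    show "U \<in> lattice u v" "U \<noteq> 0" using US by (auto simp: S_def)
    show "cmod U \<le> cmod z" if "z \<in> lattice u v" "z \<noteq> 0" for z
      using that Umin[of z] US by (cases "cmod z \<le> cmod u") (auto simp: S_def)
  qed
qed

lemma shortest_lattice_vector_coprime: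
  assumes nz: "of_int m * u + of_int n * v \<noteq> 0"
    and min: "\<And>z. z \<in> lattice u v \<Longrightarrow> z \<noteq> 0 \<Longrightarrow> cmod (of_int m * u + of_int n * v) \<le> cmod z"
  shows "coprime m n"
proof (rule ccontr)
  define g where "g = gcd m n"
  assume "\<not> coprime m n"
  moreover have "g \<noteq> 0" using nz by (auto simp: g_def)
  ultimately have g2: "g \<ge> 2"
    using gcd_ge_0_int[of m n] unfolding g_def coprime_iff_gcd_eq_1 by linarith
  obtain m' n' where "m = g * m'" "n = g * n'" unfolding g_def by (meson dvdE gcd_dvd1 gcd_dvd2)
  then have eq: "of_int m * u + of_int n * v = of_int g * (of_int m' * u + of_int n' * v)"
    by (simp add: algebra_simps)
  define z where "z = of_int m' * u + of_int n' * v"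
  have "z \<noteq> 0" using nz by (simp add: eq z_def)
  have "cmod (of_int m * u + of_int n * v) = of_int g * cmod z"
    using g2 by (simp add: eq z_def norm_mult)
  also have "\<dots> \<ge> 2 * cmod z" using g2 by (intro mult_right_mono) auto
  moreover have "cmod (of_int m * u + of_int n * v) \<le> cmod z"
    using min[of z] \<open>z \<noteq> 0\<close> by (auto simp: z_def)
  ultimately show False using zero_less_norm_iff[of z] \<open>z \<noteq> 0\<close> by linarith
qed

lemma lattice_basis_completion:
  assumes "coprime m n"
  obtains V where "V \<in> lattice u v"
    "Im (cnj (of_int m * u + of_int n * v) * V) = Im (cnj u * v)"
proof -
  obtain x y where "x * m + y * n = gcd m n" using bezout_int by blast
  with assms have det: "m * x - n * (-y) = 1" by (simp add: coprime_iff_gcd_eq_1 algebra_simps)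
  show ?thesis
  proof (rule that)
    show "of_int (-y) * u + of_int x * v \<in> lattice u v" ..
    show "Im (cnj (of_int m * u + of_int n * v) * (of_int (-y) * u + of_int x * v)) = Im (cnj u * v)"
      by (simp only: Im_cnj_lattice_mult det)
  qed
qed

lemma lattice_reduced_basis:
  assumes D: "Im (cnj u * v) \<noteq> 0"
  obtains U V where "U \<in> lattice u v" "V \<in> lattice u v" "U \<noteq> 0"
    "\<And>z. z \<in> lattice u v \<Longrightarrow> z \<noteq> 0 \<Longrightarrow> cmod U \<le> cmod z"
    "Im (cnj U * V) = Im (cnj u * v)"
proof -
  obtain U where U: "U \<in> lattice u v" "U \<noteq> 0"
    and min: "\<And>z. z \<in> lattice u v \<Longrightarrow> z \<noteq> 0 \<Longrightarrow> cmod U \<le> cmod z"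
    using lattice_shortest_vector[OF D] by blast
  obtain m n where Ue: "U = of_int m * u + of_int n * v" using U(1) by (rule lattice_memE)
  have "coprime m n" using shortest_lattice_vector_coprime U(2) min unfolding Ue by blast
  then obtain V where "V \<in> lattice u v" "Im (cnj U * V) = Im (cnj u * v)"
    unfolding Ue by (rule lattice_basis_completion)
  with U min that show ?thesis by blast
qed

lemma nearest_int_multiple:
  fixes x c :: real
  assumes "c \<noteq> 0"
  obtains k :: int where "\<bar>x - of_int k * c\<bar> \<le> \<bar>c\<bar> / 2"
proof
  define k where "k = \<lfloor>x / c + 1/2\<rfloor>"
  have "\<bar>x / c - of_int k\<bar> \<le> 1/2" unfolding k_def by linarith
  then have "\<bar>c\<bar> * \<bar>x / c - of_int k\<bar> \<le> \<bar>c\<bar> * (1/2)" by (rule mult_left_mono) simp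
  also have "\<dots> = \<bar>c\<bar> / 2" by simp
  also have "\<bar>c\<bar> * \<bar>x / c - of_int k\<bar> = \<bar>x - of_int k * c\<bar>"
    using assms by (simp add: abs_mult[symmetric] field_simps)
  finally show "\<bar>x - of_int k * c\<bar> \<le> \<bar>c\<bar> / 2" .
qed

lemma norm_power2_mult_eq_Re_Im:
  "(cmod U)^2 * (cmod z)^2 = (Re (cnj U * z))^2 + (Im (cnj U * z))^2"
proof -
  have "(cmod (cnj U * z))^2 = (Re (cnj U * z))^2 + (Im (cnj U * z))^2" by (rule cmod_power2)
  then show ?thesis by (simp add: norm_mult power_mult_distrib)
qed

lemma Re_Im_cnj_mult_self: "Re (cnj U * U) = (cmod U)^2" "Im (cnj U * U) = 0"
  using cmod_power2[of U] by (simp_all add: power2_eq_square)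

lemma lattice_covering:
  assumes U: "U \<noteq> 0" and D: "Im (cnj U * V) \<noteq> 0"
  obtains z where "z \<in> lattice U V"
    "4 * (cmod U)^2 * (cmod (w - z))^2 \<le> (cmod U)^4 + (Im (cnj U * V))^2"
proof -
  define A where "A = (cmod U)^2"
  define D where "D = Im (cnj U * V)"
  have "A \<noteq> 0" using U by (simp add: A_def)
  obtain j :: int where j: "\<bar>Im (cnj U * w) - of_int j * D\<bar> \<le> \<bar>D\<bar> / 2"
    using nearest_int_multiple D unfolding D_def by blast
  obtain k :: int
    where k: "\<bar>(Re (cnj U * w) - of_int j * Re (cnj U * V)) - of_int k * A\<bar> \<le> \<bar>A\<bar> / 2"
    using nearest_int_multiple \<open>A \<noteq> 0\<close> by blast
  define z where "z = of_int k * U + of_int j * V"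
  have "Re (cnj U * (w - z))
          = Re (cnj U * w) - of_int j * Re (cnj U * V) - of_int k * Re (cnj U * U)"
    by (simp add: z_def algebra_simps)
  then have "Re (cnj U * (w - z)) = (Re (cnj U * w) - of_int j * Re (cnj U * V)) - of_int k * A"
    by (simp only: Re_Im_cnj_mult_self A_def)
  then have "\<bar>Re (cnj U * (w - z))\<bar> \<le> \<bar>A/2\<bar>" using k by simp
  then have "(Re (cnj U * (w - z)))^2 \<le> (A/2)^2" by (simp only: abs_le_square_iff)
  moreover have "Im (cnj U * (w - z))
          = Im (cnj U * w) - of_int j * D - of_int k * Im (cnj U * U)"
    by (simp add: z_def D_def algebra_simps)
  then have "Im (cnj U * (w - z)) = Im (cnj U * w) - of_int j * D"
    by (simp only: Re_Im_cnj_mult_self)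
  then have "\<bar>Im (cnj U * (w - z))\<bar> \<le> \<bar>D/2\<bar>" using j by simp
  then have "(Im (cnj U * (w - z)))^2 \<le> (D/2)^2" by (simp only: abs_le_square_iff)
  ultimately have "A * (cmod (w - z))^2 \<le> (A/2)^2 + (D/2)^2"
    by (simp add: A_def norm_power2_mult_eq_Re_Im)
  then have "4 * A * (cmod (w - z))^2 \<le> A^2 + D^2" by (simp add: power_divide)
  moreover have "z \<in> lattice U V" unfolding z_def ..
  ultimately show ?thesis using that by (simp add: A_def D_def flip: power_mult)
qed

lemma shortest_lattice_vector_height:
  assumes U: "U \<noteq> 0" and D: "Im (cnj U * V) \<noteq> 0"
    and min: "\<And>z. z \<in> lattice U V \<Longrightarrow> z \<noteq> 0 \<Longrightarrow> cmod U \<le> cmod z"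
  shows "3 * (cmod U)^4 \<le> 4 * (Im (cnj U * V))^2"
proof -
  define A where "A = (cmod U)^2"
  define D where "D = Im (cnj U * V)"
  have "A \<noteq> 0" using U by (simp add: A_def)
  obtain k :: int where k: "\<bar>Re (cnj U * V) - of_int k * A\<bar> \<le> \<bar>A\<bar> / 2"
    using nearest_int_multiple \<open>A \<noteq> 0\<close> by blast
  define z where "z = V - of_int k * U"
  have "z = of_int (-k) * U + of_int 1 * V" by (simp add: z_def)
  then have "z \<in> lattice U V" by (metis lattice_memI)
  have "Im (cnj U * z) = D - of_int k * Im (cnj U * U)"
    by (simp add: z_def D_def algebra_simps)
  then have Im: "Im (cnj U * z) = D" by (simp only: Re_Im_cnj_mult_self)
  have "Re (cnj U * z) = Re (cnj U * V) - of_int k * Re (cnj U * U)"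
    by (simp add: z_def algebra_simps)
  then have "Re (cnj U * z) = Re (cnj U * V) - of_int k * A"
    by (simp only: Re_Im_cnj_mult_self A_def)
  then have "\<bar>Re (cnj U * z)\<bar> \<le> \<bar>A/2\<bar>" using k by simp
  then have Re: "(Re (cnj U * z))^2 \<le> (A/2)^2" by (simp only: abs_le_square_iff)
  have "z \<noteq> 0" using Im D by (auto simp: D_def)
  then have "A \<le> (cmod z)^2"
    using min[OF \<open>z \<in> lattice U V\<close>] by (simp add: A_def power_mono)
  then have "A * A \<le> A * (cmod z)^2" by (rule mult_left_mono) (simp add: A_def)
  also have "\<dots> = (Re (cnj U * z))^2 + D^2"
    by (simp only: A_def norm_power2_mult_eq_Re_Im Im)
  also have "\<dots> \<le> (A/2)^2 + D^2" using Re by simp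
  finally have "3 * A^2 \<le> 4 * D^2" by (simp add: power2_eq_square field_simps)
  then show ?thesis by (simp add: A_def D_def flip: power_mult)
qed

section \<open>Tori\<close>

lemma embedded_disk_FlatTorusI:
  assumes "\<And>t. t \<in> lattice u v \<Longrightarrow> t \<noteq> 0 \<Longrightarrow> 2*r \<le> cmod t"
  shows "embedded_disk (FlatTorus u v) p r"
  unfolding embedded_disk_def deck_group_FlatTorus_eq
proof (intro allI impI)
  fix x y g
  assume x: "dist x p < r" and y: "dist y p < r"
    and "g \<in> (\<lambda>t z. z + t) ` lattice u v" and "x = g y"
  then obtain t where t: "t \<in> lattice u v" "x = y + t" by auto
  have "cmod t = dist x y" using t(2) by (simp add: dist_norm)
  also have "\<dots> \<le> dist x p + dist y p" by (rule dist_triangle2)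
  finally have "cmod t < 2*r" using x y by linarith
  then have "t = 0" using assms[OF t(1)] by (meson not_le)
  then show "x = y" using t(2) by simp
qed

lemma disjoint_disks_FlatTorusI:
  assumes "\<And>t. t \<in> lattice u v \<Longrightarrow> 2*r \<le> cmod (p - q - t)"
  shows "disjoint_disks (FlatTorus u v) p q r"
  unfolding disjoint_disks_def deck_group_FlatTorus_eq
proof (intro allI impI notI)
  fix x y g
  assume x: "dist x p < r" and y: "dist y q < r"
    and "g \<in> (\<lambda>t z. z + t) ` lattice u v" and "x = g y"
  then obtain t where t: "t \<in> lattice u v" "x = y + t" by auto
  have "cmod (p - q - t) = cmod ((p - x) + (y - q))" using t(2) by (simp add: algebra_simps)
  also have "\<dots> \<le> cmod (p - x) + cmod (y - q)" by (rule norm_triangle_ineq)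
  also have "\<dots> = dist x p + dist y q" by (simp add: dist_norm norm_minus_commute)
  finally show False using assms[OF t(1)] x y by linarith
qed

lemma torus_ratio_ineq:
  fixes H S T d2 :: real
  assumes H: "0 < H" and HS: "H \<le> S" and ST: "3*S \<le> 4*T" and Hd: "H \<le> d2" and dST: "4*d2 \<le> S + T"
  shows "3*H*(4*H + d2) \<le> 5*S*T"
proof -
  have "3*H*d2 \<le> 3*H*((S+T)/4)" using dST H by (intro mult_left_mono) auto
  moreover have "48*H^2 + 3*H*(S+T) \<le> 20*S*T"
  proof (cases "T \<ge> 3*H")
    case True
    have "(S - H)*(20*T - 3*H) \<ge> 0" using HS True H by (intro mult_nonneg_nonneg) auto
    moreover have "H*(3*H) \<le> H*T" using True H by (intro mult_left_mono) auto
    ultimately show ?thesis by (simp add: power2_eq_square algebra_simps)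
  next
    case False
    define e where "e = S - (4*H - T)"
    have "e \<ge> 0" using Hd dST by (simp add: e_def)
    have "T \<ge> H" using ST Hd dST H by linarith
    have "(T - H)*(3*H - T) \<ge> 0" using \<open>T \<ge> H\<close> False by (intro mult_nonneg_nonneg) auto
    moreover have "e*(20*T - 3*H) \<ge> 0" using \<open>e \<ge> 0\<close> \<open>T \<ge> H\<close> H by (intro mult_nonneg_nonneg) auto
    moreover have "20*S*T - (48*H^2 + 3*H*(S+T)) = 20*((T - H)*(3*H - T)) + e*(20*T - 3*H)"
      by (simp add: e_def algebra_simps power2_eq_square)
    ultimately show ?thesis by linarith
  qed
  ultimately show ?thesis by (simp add: power2_eq_square algebra_simps)
qed

lemma flat_dist_FlatTorus_le:
  assumes "t \<in> lattice u v"
  shows "flat_dist (FlatTorus u v) p q \<le> cmod (p - q - t)"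
proof -
  have "(\<lambda>z. z + t) \<in> deck_group (FlatTorus u v)"
    using assms unfolding deck_group_FlatTorus_eq by blast
  from flat_dist_le_deck[OF this] show ?thesis by (simp add: dist_norm algebra_simps)
qed

lemma two_disk_config_FlatTorus_bounds:
  assumes cfg: "two_disk_config (FlatTorus u v) p q h"
  shows "h \<le> flat_dist (FlatTorus u v) p q"
    and "\<And>t. t \<in> lattice u v \<Longrightarrow> t \<noteq> 0 \<Longrightarrow> h \<le> cmod t"
proof -
  have emb: "embedded_disk (FlatTorus u v) p (h/2)" and disj: "disjoint_disks (FlatTorus u v) p q (h/2)"
    using cfg by (auto simp: two_disk_config_def)
  have "deck_group (FlatTorus u v) \<noteq> {}" unfolding deck_group_FlatTorus_eq lattice_def by blast
  then show "h \<le> flat_dist (FlatTorus u v) p q"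
  proof (rule flat_dist_ge_deck)
    fix g assume g: "g \<in> deck_group (FlatTorus u v)"
    then obtain t where "g = (\<lambda>z. (if True then z else cnj z) + t)"
      unfolding deck_group_FlatTorus_eq by auto
    from disjoint_disks_dist_ge[OF disj g this] show "h \<le> dist p (g q)" by simp
  qed
  fix t assume "t \<in> lattice u v" "t \<noteq> 0"
  moreover have "(\<lambda>z. z + t) \<in> deck_group (FlatTorus u v)"
    using \<open>t \<in> lattice u v\<close> unfolding deck_group_FlatTorus_eq by blast
  ultimately show "h \<le> cmod t" using embedded_disk_translation_ge[OF emb] by simp
qed

lemma torus_two_disk_bound:
  assumes cfg: "two_disk_config (FlatTorus u v) p q h"
  shows "3*h^2*(4*h^2 + (flat_dist (FlatTorus u v) p q)^2) \<le> 5*(flat_vol (FlatTorus u v))^2"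
proof -
  define d where "d = flat_dist (FlatTorus u v) p q"
  define D where "D = Im (cnj u * v)"
  have h: "h > 0" and "D \<noteq> 0" using cfg by (auto simp: two_disk_config_def D_def)
  have "h \<le> d" using two_disk_config_FlatTorus_bounds(1)[OF cfg] by (simp add: d_def)
  obtain U V where UV: "U \<in> lattice u v" "V \<in> lattice u v" "U \<noteq> 0"
    and min: "\<And>z. z \<in> lattice u v \<Longrightarrow> z \<noteq> 0 \<Longrightarrow> cmod U \<le> cmod z"
    and det: "Im (cnj U * V) = D"
    using lattice_reduced_basis \<open>D \<noteq> 0\<close> unfolding D_def by blast
  have sub: "lattice U V \<subseteq> lattice u v" using lattice_subset UV by blast
  define A where "A = (cmod U)^2"
  define T where "T = D^2 / A"
  have "A > 0" using UV by (simp add: A_def)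
  have "h \<le> cmod U" using two_disk_config_FlatTorus_bounds(2)[OF cfg] UV by simp
  then have hA: "h^2 \<le> A" using h by (simp add: A_def power_mono)
  have "3 * A^2 \<le> 4 * D^2"
    using shortest_lattice_vector_height[of U V] UV min sub \<open>D \<noteq> 0\<close> det
    by (auto simp: A_def simp flip: power_mult)
  then have AT: "3*A \<le> 4*T" using \<open>A > 0\<close> by (simp add: T_def field_simps power2_eq_square)
  obtain z where "z \<in> lattice U V" and cover: "4 * A * (cmod (p - q - z))^2 \<le> A^2 + D^2"
    using lattice_covering[of U V "p - q"] UV \<open>D \<noteq> 0\<close> det by (auto simp: A_def simp flip: power_mult)
  then have "d \<le> cmod (p - q - z)" unfolding d_def using flat_dist_FlatTorus_le sub by blast
  then have "d^2 \<le> (cmod (p - q - z))^2" using \<open>h \<le> d\<close> h by (simp add: power_mono)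
  then have "4*A*d^2 \<le> 4*A*(cmod (p - q - z))^2" using \<open>A > 0\<close> by (intro mult_left_mono) auto
  then have "4*A*d^2 \<le> A^2 + D^2" using cover by linarith
  moreover have "A + T = (A^2 + D^2) / A" using \<open>A > 0\<close> by (simp add: T_def field_simps power2_eq_square)
  ultimately have "4*d^2 \<le> A + T" using \<open>A > 0\<close> by (simp add: pos_le_divide_eq mult_ac)
  moreover have "h^2 \<le> d^2" using \<open>h \<le> d\<close> h by (simp add: power_mono)
  ultimately have "3*h^2*(4*h^2 + d^2) \<le> 5*A*T"
    using torus_ratio_ineq[OF _ hA AT] h by simp
  then show ?thesis using \<open>A > 0\<close> by (simp add: d_def T_def D_def power2_abs)
qed

section \<open>Klein bottles\<close>

lemma klein_ineq_wide:
  fixes a b h e0 e1 U W D :: real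
  assumes h: "h > 0" and ha: "h \<le> a" and hb: "h \<le> b"
    and e0: "e0 \<ge> 0" and e1: "e1 \<ge> 0" and e01: "e0 + e1 = a"
    and U: "\<bar>U\<bar> \<le> b/2" and W: "\<bar>W\<bar> \<le> b/2"
    and hD: "h^2 \<le> D" and De0: "D \<le> e0^2 + U^2" and De1: "D \<le> e1^2 + W^2"
  shows "3*h^2*(4*h^2 + D) \<le> 5*a^2*b^2"
proof -
  define H where "H = h^2"
  define S where "S = a^2"
  define T where "T = b^2"
  have "H > 0" using h by (simp add: H_def)
  have "U^2 \<le> (b/2)^2" "W^2 \<le> (b/2)^2"
    using U W by (meson abs_ge_zero order_trans power2_le_iff_abs_le)+
  moreover have "(min e0 e1)^2 \<le> (a/2)^2" using e0 e1 e01 by (intro power_mono) auto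
  ultimately have "D \<le> (a/2)^2 + (b/2)^2"
    using De0 De1 by (cases "e0 \<le> e1") (auto simp: min_def)
  then have DST: "4*D \<le> S + T" by (simp add: S_def T_def power_divide)
  have "H \<le> S" "H \<le> T" unfolding S_def T_def H_def using ha hb h by (simp_all add: power_mono)
  then have "(S - H)*(T - H) \<ge> 0" by simp
  then have "S*T \<ge> H*(S+T) - H^2" by (simp add: algebra_simps power2_eq_square)
  moreover have "4*H \<le> S + T" using hD DST by (simp add: H_def)
  moreover have "3*H*D \<le> 3*H*((S+T)/4)" using DST \<open>H > 0\<close> by (intro mult_left_mono) auto
  moreover have "H*(4*H) \<le> H*(S+T)" using \<open>4*H \<le> S+T\<close> \<open>H > 0\<close> by (intro mult_left_mono) auto
  ultimately have "12*H^2 + 3*H*D \<le> 5*S*T" by (simp add: power2_eq_square algebra_simps)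
  then show ?thesis by (simp add: S_def T_def H_def power2_eq_square algebra_simps)
qed

lemma klein_ineq_of_quadratic:
  fixes a H c \<beta> D x :: real
  assumes H: "H > 0" "3*H \<le> 20*a^2" and c: "0 \<le> c" and x: "0 \<le> x" "x \<le> \<beta>"
    and D: "D \<le> H + \<beta>^2 - 2*\<beta>*c"
    and quad: "15*H^2 \<le> (20*a^2 - 3*H)*x^2 + 6*H*c*x"
  shows "3*H*(4*H + D) \<le> 20*a^2*\<beta>^2"
proof -
  have "(20*a^2 - 3*H)*x^2 \<le> (20*a^2 - 3*H)*\<beta>^2" using H x by (intro mult_left_mono power_mono) auto
  moreover have "6*H*c*x \<le> 6*H*c*\<beta>" using H c x by (intro mult_left_mono) auto
  moreover have "3*H*D \<le> 3*H*(H + \<beta>^2 - 2*\<beta>*c)" using D H by (intro mult_left_mono) auto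
  ultimately show ?thesis using quad by (simp add: power2_eq_square algebra_simps)
qed

lemma klein_quadratic_at_2c:
  fixes a H c :: real
  assumes cc: "c^2 = H - a^2" and "H \<le> 4*a^2" "4*a^2 \<le> 3*H"
  shows "15*H^2 \<le> (20*a^2 - 3*H)*(2*c)^2 + 6*H*c*(2*c)"
proof -
  have "(20*a^2 - 3*H)*(2*c)^2 + 6*H*c*(2*c) - 15*H^2 = 80*a^2*c^2 - 15*H^2"
    by (simp add: power2_eq_square algebra_simps)
  also have "\<dots> = 80*a^2*(H - a^2) - 15*H^2" by (simp only: cc)
  also have "\<dots> = 5*((4*a^2 - H)*(3*H - 4*a^2))" by (simp add: power2_eq_square algebra_simps)
  also have "\<dots> \<ge> 0" using assms by (intro mult_nonneg_nonneg) auto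
  finally show ?thesis by simp
qed

lemma klein_quadratic_at_h:
  fixes a h H c :: real
  assumes HH: "H = h^2" and h: "h > 0" and c: "c > 0" and cc: "c^2 = H - a^2" and c2: "4*c^2 < H"
  shows "15*H^2 \<le> (20*a^2 - 3*H)*h^2 + 6*H*c*h"
proof -
  have "(2*c)^2 \<le> h^2" using c2 HH by (simp add: power_mult_distrib)
  then have "2*c \<le> h" by (rule power2_le_imp_le) (use h in simp)
  have "a^2 = H - c^2" using cc by simp
  have "(20*a^2 - 3*H)*h^2 + 6*H*c*h - 15*H^2 = 20*a^2*H - 18*H^2 + 6*H*h*c"
    by (simp add: HH power2_eq_square algebra_simps)
  also have "\<dots> = 20*(H - c^2)*H - 18*H^2 + 6*H*h*c" by (simp only: \<open>a^2 = H - c^2\<close>)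
  also have "\<dots> = H*((h - 2*c)*(2*h + 10*c))" by (simp add: HH power2_eq_square algebra_simps)
  also have "\<dots> \<ge> 0" using \<open>2*c \<le> h\<close> c h HH by (intro mult_nonneg_nonneg) auto
  finally show ?thesis by simp
qed

text \<open>When the vertical half-period \<open>\<beta>\<close> is shorter than \<open>h\<close>, the glide constraint
  forces \<open>s = sqrt (h\<^sup>2 - \<beta>\<^sup>2) \<le> Q\<close>; then \<open>k = a s + \<beta> c\<close> and \<open>m = a \<beta> - c s\<close>
  satisfy \<open>m\<^sup>2 + k\<^sup>2 = h\<^sup>4\<close>, which bounds \<open>a\<^sup>2 \<beta>\<^sup>2\<close> from below.\<close>

lemma klein_ineq_narrow_short:
  fixes a h H c \<beta> P Q X Y D :: real
  assumes HH: "H = h^2" and h: "h > 0" and a: "a > 0" and c: "c > 0"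
    and cc: "c^2 = H - a^2" and c2: "4*c^2 < H" and \<beta>: "0 < \<beta>" "\<beta> < h"
    and P: "P \<ge> 0" and Q: "Q \<ge> 0" and PQ: "P + Q = a"
    and X2: "X^2 \<le> (\<beta> - c)^2" and Y2: "Y^2 \<le> \<beta>^2"
    and DX: "D \<le> P^2 + X^2" and HY: "H \<le> Q^2 + Y^2" and HD: "H \<le> D"
  shows "3*H*(4*H + D) \<le> 20*a^2*\<beta>^2"
proof -
  have "H > 0" using h HH by simp
  define s where "s = sqrt (H - \<beta>^2)"
  have \<beta>H: "\<beta>^2 < H" using \<beta> h unfolding HH by (simp add: power_strict_mono)
  have s: "s \<ge> 0" "s^2 = H - \<beta>^2" using \<beta>H by (simp_all add: s_def)
  have "s^2 \<le> Q^2" using HY Y2 s by linarith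
  then have "s \<le> Q" using Q by (simp add: power2_le_iff_abs_le)
  then have "P^2 \<le> (a - s)^2" using P PQ by (intro power_mono) auto
  then have "D \<le> (a - s)^2 + (\<beta> - c)^2" using DX X2 by linarith
  also have "\<dots> = (a^2 + c^2) + (s^2 + \<beta>^2) - 2*(a*s + \<beta>*c)"
    by (simp add: power2_eq_square algebra_simps)
  finally have Dk: "D \<le> 2*H - 2*(a*s + \<beta>*c)" using cc s by simp
  define k where "k = a*s + \<beta>*c"
  define m where "m = a*\<beta> - c*s"
  have "k \<ge> 0" using a s \<beta> c by (simp add: k_def)
  have kH: "2*k \<le> H" using Dk HD by (simp add: k_def)
  have "m^2 + k^2 = (a^2 + c^2)*(\<beta>^2 + s^2)" by (simp add: m_def k_def power2_eq_square algebra_simps)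
  then have mk: "m^2 + k^2 = H^2" using cc s by (simp add: power2_eq_square)
  have "m \<ge> 0"
  proof (rule ccontr)
    assume "\<not> m \<ge> 0"
    moreover have "a*\<beta> > 0" using a \<beta> by simp
    ultimately have "(-m)^2 \<le> (c*s)^2" by (intro power_mono) (auto simp: m_def)
    then have "m^2 \<le> c^2 * s^2" by (simp add: power_mult_distrib)
    then have "H^2 - k^2 \<le> c^2 * s^2" using mk by linarith
    moreover have "k^2 \<le> (H/2)^2" using \<open>k \<ge> 0\<close> kH by (intro power_mono) auto
    moreover have "c^2 * s^2 \<le> (H/4) * H" using c2 s \<beta>H \<open>H > 0\<close> by (intro mult_mono) auto
    moreover have "H^2 > 0" using \<open>H > 0\<close> by simp
    ultimately show False by (simp add: power_divide power2_eq_square)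
  qed
  moreover have "c*s \<ge> 0" using c s by simp
  ultimately have "m^2 \<le> (a*\<beta>)^2" by (intro power_mono) (auto simp: m_def)
  then have "m^2 \<le> a^2 * \<beta>^2" by (simp add: power_mult_distrib)
  then have "a^2*\<beta>^2 \<ge> H^2 - k^2" using mk by linarith
  moreover have "(H - 2*k)*(2*H + 10*k) \<ge> 0"
    using kH \<open>k \<ge> 0\<close> \<open>H > 0\<close> by (intro mult_nonneg_nonneg) auto
  moreover have "3*H*D \<le> 3*H*(2*H - 2*k)" using Dk \<open>H > 0\<close> by (intro mult_left_mono) (auto simp: k_def)
  ultimately show ?thesis by (simp add: power2_eq_square algebra_simps)
qed

lemma klein_ineq_narrow:
  fixes a h H c \<beta> P Q X Y D :: real
  assumes HH: "H = h^2" and h: "h > 0" and h2a: "h \<le> 2*a"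
    and c: "c > 0" and cc: "c^2 = H - a^2" and \<beta>: "\<beta> > 0"
    and P: "P \<ge> 0" and Q: "Q \<ge> 0" and PQ: "P + Q = a"
    and X: "\<bar>X\<bar> \<le> \<beta> - c" and Y: "\<bar>Y\<bar> \<le> \<beta>"
    and DX: "D \<le> P^2 + X^2" and HY: "H \<le> Q^2 + Y^2" and HD: "H \<le> D"
  shows "3*H*(4*H + D) \<le> 20*a^2*\<beta>^2"
proof -
  have "H > 0" "a > 0" using h HH h2a by auto
  have X2: "X^2 \<le> (\<beta> - c)^2" and Y2: "Y^2 \<le> \<beta>^2"
    using X Y by (meson abs_ge_zero order_trans power2_le_iff_abs_le)+
  have "P^2 \<le> a^2" using P Q PQ by (intro power_mono) auto
  have "h^2 \<le> (2*a)^2" using h2a h by (intro power_mono) auto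
  then have H4a: "H \<le> 4*a^2" by (simp add: HH power_mult_distrib)
  have "D \<le> a^2 + (\<beta> - c)^2" using DX X2 \<open>P^2 \<le> a^2\<close> by linarith
  also have "\<dots> = (a^2 + c^2) + \<beta>^2 - 2*\<beta>*c" by (simp add: power2_eq_square algebra_simps)
  finally have Dgen: "D \<le> H + \<beta>^2 - 2*\<beta>*c" using cc by simp
  have quad: "3*H*(4*H + D) \<le> 20*a^2*\<beta>^2"
    if "0 \<le> x" "x \<le> \<beta>" "15*H^2 \<le> (20*a^2 - 3*H)*x^2 + 6*H*c*x" for x
    by (rule klein_ineq_of_quadratic[OF \<open>H > 0\<close> _ _ that(1,2) Dgen that(3)]) (use H4a \<open>H > 0\<close> c in auto)
  show ?thesis
  proof (cases "4*a^2 \<le> 3*H")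
    case True
    have "(\<beta> - c)^2 = \<beta>^2 - 2*\<beta>*c + c^2" by (simp add: power2_eq_square algebra_simps)
    then have "c^2 \<le> (\<beta> - c)^2" using HD Dgen by linarith
    moreover have "0 \<le> \<beta> - c" using X abs_ge_zero[of X] by linarith
    ultimately have "2*c \<le> \<beta>" using power2_le_iff_abs_le[of "\<beta> - c" c] c by simp
    moreover have "15*H^2 \<le> (20*a^2 - 3*H)*(2*c)^2 + 6*H*c*(2*c)"
      using klein_quadratic_at_2c[OF cc H4a True] .
    ultimately show ?thesis using c by (intro quad) auto
  next
    case False
    then have c2: "4*c^2 < H" using cc by linarith
    show ?thesis
    proof (cases "h \<le> \<beta>")
      case True
      have "15*H^2 \<le> (20*a^2 - 3*H)*h^2 + 6*H*c*h"
        using klein_quadratic_at_h[OF HH h c cc c2] .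
      then show ?thesis by (rule quad[rotated 2]) (use True h in auto)
    next
      case False
      then show ?thesis
        using klein_ineq_narrow_short[OF HH h \<open>a > 0\<close> c cc c2 \<beta> _ P Q PQ X2 Y2 DX HY HD] by simp
    qed
  qed
qed

text \<open>In the Klein bottle estimate, \<open>e0\<close> and \<open>e1\<close> are the horizontal distances from
  \<open>Re (p - q)\<close> to the nearest even and odd multiples of \<open>a\<close>, \<open>U\<close> and \<open>W\<close> the vertical
  offsets of the corresponding lifts of \<open>q\<close> reduced modulo \<open>b\<close>, and the six numbers in
  \<open>glide\<close> are vertical displacements of \<open>p\<close> and \<open>q\<close> under glide reflections.\<close>

lemma klein_ineq:
  fixes a b h e0 e1 U W D :: real
  assumes h: "h > 0" and h2a: "h \<le> 2*a" and hb: "h \<le> b"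
    and e0: "e0 \<ge> 0" and e1: "e1 \<ge> 0" and e01: "e0 + e1 = a"
    and U: "\<bar>U\<bar> \<le> b/2" and W: "\<bar>W\<bar> \<le> b/2"
    and glide: "\<And>t. t \<in> {U + W, U + W - b, U + W + b, W - U, W - U - b, W - U + b}
      \<Longrightarrow> h^2 \<le> a^2 + t^2"
    and hD: "h^2 \<le> D" and De0: "D \<le> e0^2 + U^2" and De1: "D \<le> e1^2 + W^2"
    and he0: "h^2 \<le> e0^2 + U^2" and he1: "h^2 \<le> e1^2 + W^2"
  shows "3*h^2*(4*h^2 + D) \<le> 5*a^2*b^2"
proof (cases "h \<le> a")
  case True
  then show ?thesis by (rule klein_ineq_wide[OF h _ hb e0 e1 e01 U W hD De0 De1])
next
  case False
  define H where "H = h^2"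
  define c where "c = sqrt (H - a^2)"
  define \<beta> where "\<beta> = b/2"
  have "a > 0" "\<beta> > 0" using h2a hb h by (auto simp: \<beta>_def)
  have "a^2 < H" using False \<open>a > 0\<close> unfolding H_def by (simp add: power_strict_mono)
  then have c: "c > 0" and cc: "c^2 = H - a^2" by (simp_all add: c_def)
  have ct: "c \<le> \<bar>t\<bar>" if "t \<in> {U + W, U + W - b, U + W + b, W - U, W - U - b, W - U + b}" for t
    using glide[OF that] cc c abs_le_square_iff[of c t] by (simp add: H_def)
  have "c \<le> \<bar>U + W\<bar>" "c \<le> \<bar>U + W - b\<bar>" "c \<le> \<bar>U + W + b\<bar>"
    "c \<le> \<bar>W - U\<bar>" "c \<le> \<bar>W - U - b\<bar>" "c \<le> \<bar>W - U + b\<bar>"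
    by (simp_all add: ct)
  then have "\<bar>U\<bar> \<le> \<beta> - c \<or> \<bar>W\<bar> \<le> \<beta> - c"
    using U W unfolding \<beta>_def by linarith
  then have "3*H*(4*H + D) \<le> 20*a^2*\<beta>^2"
  proof
    assume X: "\<bar>U\<bar> \<le> \<beta> - c"
    show ?thesis
      by (rule klein_ineq_narrow[OF H_def h h2a c cc \<open>\<beta> > 0\<close> e0 e1 e01 X _ De0])
        (use W he1 hD in \<open>auto simp: \<beta>_def H_def\<close>)
  next
    assume X: "\<bar>W\<bar> \<le> \<beta> - c"
    have "e1 + e0 = a" using e01 by simp
    then show ?thesis
      by (rule klein_ineq_narrow[OF H_def h h2a c cc \<open>\<beta> > 0\<close> e1 e0 _ X _ De1])
        (use U he0 hD in \<open>auto simp: \<beta>_def H_def\<close>)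
  qed
  then show ?thesis by (simp add: H_def \<beta>_def power_divide)
qed

lemma even_odd_multiples_split:
  fixes x a :: real
  assumes a: "a > 0"
  obtains ke ko :: int and e0 e1 :: real
  where "even ke" "odd ko" "0 \<le> e0" "0 \<le> e1" "e0 + e1 = a"
    "(x - of_int ke * a)^2 = e0^2" "(x - of_int ko * a)^2 = e1^2"
proof -
  define k where "k = \<lfloor>x / a\<rfloor>"
  define \<delta> where "\<delta> = x - of_int k * a"
  have "of_int k \<le> x / a" "x / a < of_int k + 1" unfolding k_def by linarith+
  then have "of_int k * a \<le> x" "x < (of_int k + 1) * a" using a by (simp_all add: field_simps)
  then have \<delta>: "0 \<le> \<delta>" "0 \<le> a - \<delta>" by (simp_all add: \<delta>_def algebra_simps)
  have x0: "(x - of_int k * a)^2 = \<delta>^2" by (simp add: \<delta>_def)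
  have x1: "(x - of_int (k + 1) * a)^2 = (a - \<delta>)^2" by (simp add: \<delta>_def power2_eq_square algebra_simps)
  show ?thesis
  proof (cases "even k")
    case True
    then show ?thesis using that[of k "k + 1" \<delta> "a - \<delta>"] \<delta> x0 x1 by simp
  next
    case False
    then show ?thesis using that[of "k + 1" k "a - \<delta>" \<delta>] \<delta> x0 x1 by simp
  qed
qed

lemma klein_ratio_bound_real:
  fixes a b h d x y1 y2 :: real
  assumes h: "0 < h" and h2a: "h \<le> 2*a" and hb: "h \<le> b"
    and gp: "\<And>n::int. h^2 \<le> a^2 + (2*y1 - of_int n * b)^2"
    and gq: "\<And>n::int. h^2 \<le> a^2 + (2*y2 - of_int n * b)^2"
    and far: "\<And>k n::int. h^2 \<le> (x - of_int k * a)^2 + (y1 - (if even k then y2 else - y2) - of_int n * b)^2"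
    and hd: "h^2 \<le> d^2"
    and dle: "\<And>k n::int. d^2 \<le> (x - of_int k * a)^2 + (y1 - (if even k then y2 else - y2) - of_int n * b)^2"
  shows "3*h^2*(4*h^2 + d^2) \<le> 5*a^2*b^2"
proof -
  have "a > 0" "b > 0" "b \<noteq> 0" using h h2a hb by linarith+
  obtain ke ko e0 e1 where k: "even ke" "odd ko" and e: "0 \<le> e0" "0 \<le> e1" "e0 + e1 = a"
    and xe: "(x - of_int ke * a)^2 = e0^2" and xo: "(x - of_int ko * a)^2 = e1^2"
    using even_odd_multiples_split[OF \<open>a > 0\<close>, of x] by blast
  obtain k1 :: int where k1: "\<bar>(y1 - y2) - of_int k1 * b\<bar> \<le> \<bar>b\<bar>/2"
    by (rule nearest_int_multiple[OF \<open>b \<noteq> 0\<close>])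
  obtain k2 :: int where k2: "\<bar>(y1 + y2) - of_int k2 * b\<bar> \<le> \<bar>b\<bar>/2"
    by (rule nearest_int_multiple[OF \<open>b \<noteq> 0\<close>])
  define U where "U = (y1 - y2) - of_int k1 * b"
  define W where "W = (y1 + y2) - of_int k2 * b"
  have U: "\<bar>U\<bar> \<le> b/2" and W: "\<bar>W\<bar> \<le> b/2" using k1 k2 \<open>b > 0\<close> by (simp_all add: U_def W_def)
  have "h^2 \<le> a^2 + (U + W)^2" "h^2 \<le> a^2 + (U + W - b)^2" "h^2 \<le> a^2 + (U + W + b)^2"
    using gp[of "k1 + k2"] gp[of "k1 + k2 + 1"] gp[of "k1 + k2 - 1"]
    by (simp_all add: U_def W_def algebra_simps)
  moreover have "h^2 \<le> a^2 + (W - U)^2" "h^2 \<le> a^2 + (W - U - b)^2" "h^2 \<le> a^2 + (W - U + b)^2"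
    using gq[of "k2 - k1"] gq[of "k2 - k1 + 1"] gq[of "k2 - k1 - 1"]
    by (simp_all add: U_def W_def algebra_simps)
  ultimately have glide: "h^2 \<le> a^2 + t^2"
    if "t \<in> {U + W, U + W - b, U + W + b, W - U, W - U - b, W - U + b}" for t
    using that by auto
  have De0: "d^2 \<le> e0^2 + U^2" and he0: "h^2 \<le> e0^2 + U^2"
    using dle[of ke k1] far[of ke k1] k xe by (simp_all add: U_def)
  have De1: "d^2 \<le> e1^2 + W^2" and he1: "h^2 \<le> e1^2 + W^2"
    using dle[of ko k2] far[of ko k2] k xo by (simp_all add: W_def)
  show ?thesis by (rule klein_ineq[OF h h2a hb e U W glide hd De0 De1 he0 he1])
qed

definition klein_deck :: "real \<Rightarrow> real \<Rightarrow> int \<Rightarrow> int \<Rightarrow> complex \<Rightarrow> complex" where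
  "klein_deck a b k n = (\<lambda>z. (if even k then z else cnj z)
     + (of_int k * complex_of_real a + of_int n * complex_of_real b * \<i>))"

lemma deck_group_FlatKlein_eq: "deck_group (FlatKlein a b) = {klein_deck a b k n | k n. True}"
  unfolding klein_deck_def by (simp add: add.assoc)

lemma klein_deck_mem: "klein_deck a b k n \<in> deck_group (FlatKlein a b)"
  unfolding deck_group_FlatKlein_eq by blast

lemma dist_klein_deck_power2:
  "(dist p (klein_deck a b k n q))^2
     = (Re p - Re q - of_int k * a)^2 + (Im p - (if even k then Im q else - Im q) - of_int n * b)^2"
  by (cases "even k") (simp_all add: klein_deck_def dist_norm cmod_power2 algebra_simps)

lemma klein_embedded_disk_translations:
  assumes emb: "embedded_disk (FlatKlein a b) c r" and a: "a > 0" and b: "b > 0"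
  shows "r \<le> a" "2*r \<le> b"
proof -
  have "klein_deck a b 2 0 = (\<lambda>z. z + complex_of_real (2*a))"
    "klein_deck a b 0 1 = (\<lambda>z. z + complex_of_real b * \<i>)"
    by (simp_all add: klein_deck_def)
  then have "(\<lambda>z. z + complex_of_real (2*a)) \<in> deck_group (FlatKlein a b)"
    "(\<lambda>z. z + complex_of_real b * \<i>) \<in> deck_group (FlatKlein a b)"
    by (metis klein_deck_mem)+
  from embedded_disk_translation_ge[OF emb this(1)] embedded_disk_translation_ge[OF emb this(2)]
  show "r \<le> a" "2*r \<le> b" using a b by (simp_all add: norm_mult)
qed

lemma klein_embedded_disk_glide:
  assumes emb: "embedded_disk (FlatKlein a b) c r" and a: "a > 0" and r: "r \<ge> 0"
  shows "(2*r)^2 \<le> a^2 + (2 * Im c - of_int n * b)^2"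
proof -
  have "klein_deck a b 1 n = (\<lambda>z. cnj z + (complex_of_real a + of_int n * complex_of_real b * \<i>))"
    by (simp add: klein_deck_def)
  then have "2*r \<le> cmod (cnj c + (complex_of_real a + of_int n * complex_of_real b * \<i>) - c)"
    using embedded_disk_glide_ge[OF emb] klein_deck_mem[of a b 1 n] a by simp
  then have "(2*r)^2 \<le> (cmod (cnj c + (complex_of_real a + of_int n * complex_of_real b * \<i>) - c))^2"
    using r by (intro power_mono) auto
  also have "\<dots> = a^2 + (2 * Im c - of_int n * b)^2"
    by (simp only: cmod_power2) (simp add: power2_eq_square algebra_simps)
  finally show ?thesis .
qed

lemma klein_two_disk_bound:
  assumes cfg: "two_disk_config (FlatKlein a b) p q h"
  shows "3*h^2*(4*h^2 + (flat_dist (FlatKlein a b) p q)^2) \<le> 5*(flat_vol (FlatKlein a b))^2"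
proof -
  have a: "a > 0" and b: "b > 0" and h: "h > 0"
    and embp: "embedded_disk (FlatKlein a b) p (h/2)" and embq: "embedded_disk (FlatKlein a b) q (h/2)"
    and disj: "disjoint_disks (FlatKlein a b) p q (h/2)"
    using cfg by (auto simp: two_disk_config_def)
  define d where "d = flat_dist (FlatKlein a b) p q"
  have far: "h \<le> dist p (klein_deck a b k n q)" for k n
    using disjoint_disks_dist_ge[OF disj klein_deck_mem klein_deck_def] by simp
  have "deck_group (FlatKlein a b) \<noteq> {}" using klein_deck_mem by blast
  then have "h \<le> d" unfolding d_def
  proof (rule flat_dist_ge_deck)
    fix g assume "g \<in> deck_group (FlatKlein a b)"
    then obtain k n where "g = klein_deck a b k n" unfolding deck_group_FlatKlein_eq by blast
    then show "h \<le> dist p (g q)" using far by simp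
  qed
  have "d \<le> dist p (klein_deck a b k n q)" for k n
    unfolding d_def by (rule flat_dist_le_deck[OF klein_deck_mem])
  then have "d^2 \<le> (dist p (klein_deck a b k n q))^2" for k n
    using \<open>h \<le> d\<close> h by (intro power_mono) auto
  moreover have "h^2 \<le> (dist p (klein_deck a b k n q))^2" for k n
    using far h by (intro power_mono) auto
  ultimately have dle:
    "d^2 \<le> (Re p - Re q - of_int k * a)^2 + (Im p - (if even k then Im q else - Im q) - of_int n * b)^2"
    and far2:
    "h^2 \<le> (Re p - Re q - of_int k * a)^2 + (Im p - (if even k then Im q else - Im q) - of_int n * b)^2"
    for k n by (simp_all only: dist_klein_deck_power2)
  have hd: "h^2 \<le> d^2" using \<open>h \<le> d\<close> h by (intro power_mono) auto
  have h2a: "h \<le> 2*a" and hb: "h \<le> b" using klein_embedded_disk_translations[OF embp a b] by auto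
  have glide: "h^2 \<le> a^2 + (2 * Im c - of_int n * b)^2"
    if "embedded_disk (FlatKlein a b) c (h/2)" for c n
    using klein_embedded_disk_glide[OF that a, of n] h by simp
  have "3*h^2*(4*h^2 + d^2) \<le> 5*a^2*b^2"
    by (rule klein_ratio_bound_real[OF h h2a hb glide[OF embp] glide[OF embq] far2 hd dle])
  then show ?thesis by (simp add: d_def power_mult_distrib)
qed

lemma two_disk_ratio_le:
  assumes cfg: "two_disk_config N p q h"
  shows "two_disk_ratio N p q h \<le> sqrt 5 / sqrt 3"
proof -
  define d where "d = flat_dist N p q"
  define V where "V = flat_vol N"
  have "h > 0" using cfg by (simp add: two_disk_config_def)
  have bound: "3*h^2*(4*h^2 + d^2) \<le> 5*V^2"
  proof (cases N)
    case (FlatTorus u v)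
    then show ?thesis using torus_two_disk_bound cfg by (simp add: d_def V_def)
  next
    case (FlatKlein a b)
    then show ?thesis using klein_two_disk_bound cfg by (simp add: d_def V_def)
  qed
  have "V > 0" using cfg unfolding V_def two_disk_config_def by (cases N) auto
  have "(two_disk_ratio N p q h)^2 = h^2 * (4*h^2 + d^2) / V^2"
    using \<open>h > 0\<close> by (simp add: two_disk_ratio_def d_def V_def power_divide power_mult_distrib)
  also have "\<dots> \<le> (5*V^2/3) / V^2" using bound by (intro divide_right_mono) auto
  also have "\<dots> = (sqrt 5 / sqrt 3)^2" using \<open>V > 0\<close> by (simp add: power_divide)
  finally show ?thesis by (rule power2_le_imp_le) simp
qed

lemma one_le_power2_of_int:
  fixes m :: int
  assumes "m \<noteq> 0"
  shows "1 \<le> (real_of_int m)^2"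
proof -
  have "1 \<le> \<bar>real_of_int m\<bar>" using assms by (cases "m > 0") auto
  then show ?thesis using abs_le_square_iff[of 1 "real_of_int m"] by simp
qed

lemma quarter_le_power2_of_int_add_half:
  fixes m :: int
  shows "1/4 \<le> (real_of_int m + 1/2)^2"
proof -
  have "1/2 \<le> \<bar>real_of_int m + 1/2\<bar>"
  proof (cases "m \<ge> 0")
    case False
    then have "real_of_int m \<le> -1" by simp
    then show ?thesis by simp
  qed simp
  then show ?thesis using abs_le_square_iff[of "1/2" "real_of_int m + 1/2"] by (simp add: power_divide)
qed

definition hex_torus :: flat_surface where
  "hex_torus = FlatTorus 1 (complex_of_real (sqrt 3) * \<i>)"

definition hex_point :: complex where
  "hex_point = Complex (1/2) (sqrt 3 / 2)"

lemma hex_lattice_norm_ge: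
  assumes "t \<in> lattice 1 (complex_of_real (sqrt 3) * \<i>)"
  shows "t \<noteq> 0 \<Longrightarrow> 1 \<le> cmod t" and "1 \<le> cmod (hex_point + t)"
proof -
  obtain m n where t: "t = of_int m * 1 + of_int n * (complex_of_real (sqrt 3) * \<i>)"
    using assms by (rule lattice_memE)
  have norm_t: "(cmod t)^2 = (real_of_int m)^2 + 3 * (real_of_int n)^2"
    by (simp add: t cmod_power2 power_mult_distrib)
  have "(cmod (hex_point + t))^2 = (real_of_int m + 1/2)^2 + 3 * (real_of_int n + 1/2)^2"
    by (simp only: cmod_power2) (simp add: t hex_point_def power2_eq_square algebra_simps)
  then have "1 \<le> (cmod (hex_point + t))^2"
    using quarter_le_power2_of_int_add_half[of m] quarter_le_power2_of_int_add_half[of n] by linarith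
  then show "1 \<le> cmod (hex_point + t)"
    using power2_ge_1_iff[of "cmod (hex_point + t)"] norm_ge_zero[of "hex_point + t"] by auto
  assume "t \<noteq> 0"
  then have "m \<noteq> 0 \<or> n \<noteq> 0" by (auto simp: t)
  then have "1 \<le> (cmod t)^2"
    unfolding norm_t using one_le_power2_of_int[of m] one_le_power2_of_int[of n]
      zero_le_power2[of "real_of_int m"] zero_le_power2[of "real_of_int n"] by linarith
  then show "1 \<le> cmod t" using power2_ge_1_iff[of "cmod t"] norm_ge_zero[of t] by auto
qed

lemma two_disk_config_hex_torus: "two_disk_config hex_torus 0 hex_point 1"
proof -
  have emb: "embedded_disk hex_torus c (1/2)" for c
    unfolding hex_torus_def by (rule embedded_disk_FlatTorusI) (simp add: hex_lattice_norm_ge(1))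
  have "disjoint_disks hex_torus 0 hex_point (1/2)"
    unfolding hex_torus_def
  proof (rule disjoint_disks_FlatTorusI)
    fix t assume "t \<in> lattice 1 (complex_of_real (sqrt 3) * \<i>)"
    moreover have "cmod (0 - hex_point - t) = cmod (hex_point + t)"
      by (simp add: norm_minus_commute algebra_simps)
    ultimately show "2 * (1/2) \<le> cmod (0 - hex_point - t)" using hex_lattice_norm_ge(2) by simp
  qed
  then show ?thesis using emb unfolding two_disk_config_def by (simp add: hex_torus_def)
qed

lemma flat_dist_hex_torus: "flat_dist hex_torus 0 hex_point = 1"
proof (rule antisym)
  have "0 \<in> lattice 1 (complex_of_real (sqrt 3) * \<i>)" using lattice_memI[of 0 1 0] by simp
  then have translate0: "(\<lambda>z. z + 0) \<in> deck_group hex_torus"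
    unfolding hex_torus_def deck_group_FlatTorus_eq by blast
  from flat_dist_le_deck[OF translate0, of 0 hex_point] show "flat_dist hex_torus 0 hex_point \<le> 1"
    by (simp add: hex_point_def cmod_def power_divide)
  from translate0 have "deck_group hex_torus \<noteq> {}" by blast
  then show "1 \<le> flat_dist hex_torus 0 hex_point"
  proof (rule flat_dist_ge_deck)
    fix g assume "g \<in> deck_group hex_torus"
    then obtain t where t: "t \<in> lattice 1 (complex_of_real (sqrt 3) * \<i>)" "g = (\<lambda>z. z + t)"
      unfolding hex_torus_def deck_group_FlatTorus_eq by blast
    then show "1 \<le> dist 0 (g hex_point)" using hex_lattice_norm_ge(2)[OF t(1)] by simp
  qed
qed

lemma two_disk_ratio_hex_torus: "two_disk_ratio hex_torus 0 hex_point 1 = sqrt 5 / sqrt 3"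
proof -
  have "flat_vol hex_torus = sqrt 3" by (simp add: hex_torus_def)
  then show ?thesis by (simp add: two_disk_ratio_def flat_dist_hex_torus)
qed

theorem lemma6:
  shows "\<exists>N p q h. two_disk_config N p q h \<and>
           (\<forall>N' p' q' h'. two_disk_config N' p' q' h' \<longrightarrow>
              two_disk_ratio N' p' q' h' \<le> two_disk_ratio N p q h)"
proof (intro exI conjI allI impI)
  show "two_disk_config hex_torus 0 hex_point 1" by (rule two_disk_config_hex_torus)
  fix N p q h assume "two_disk_config N p q h"
  then show "two_disk_ratio N p q h \<le> two_disk_ratio hex_torus 0 hex_point 1"
    unfolding two_disk_ratio_hex_torus by (rule two_disk_ratio_le)
qed

end
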